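(* Let $m\ge 1$ and $n\geq 3m+1$ be integers, and let $p,q$ be real numbers with $0<p\leq q$ and $0<p+q<1$. Then the minimum discrepancy of $C_{n,m}$ satisfies $$\delta(C_{n,m})\leq\min\{m^2,\ (1+\gamma)m\},$$ where $\gamma=\gamma_{p,q}=\log_{\frac{q}{1-p}}\left(\frac{p}{1-q}\right)$.
   Context: For integers $n\geq 2$, $N=\binom{n}{2}$ and $1\leq m\leq n$, the community code $C_{n,m}\subseteq\mathbb{F}_2^N$ consists of exactly those binary vectors of length $N$ that are the upper-triangular (off-diagonal) part of the adjacency matrix of a simple undirected graph on the labeled vertex set $\{1,\ldots,n\}$ which is a disjoint union of cliques, each clique having at least $m$ vertices. For $\mathbf{x},\mathbf{y}\in\mathbb{F}_2^N$ and $a,b\in\mathbb{F}_2$ let $d_{ab}(\mathbf{y},\mathbf{x})=|\{i: y_i=a,\ x_i=b\}|$. The discrepancy is $\delta(\mathbf{y},\mathbf{x})=\gamma\, d_{10}(\mathbf{y},\mathbf{x})+d_{01}(\mathbf{y},\mathbf{x})$ with $\gamma=\log_{\frac{q}{1-p}}\left(\frac{p}{1-q}\right)$. The minimum discrepancy $\delta(C)$ of a code $C$ is the minimum of $\delta(\mathbf{y},\mathbf{x})$ over all ordered pairs of distinct codewords $\mathbf{x},\mathbf{y}\in C$. *)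

theory Defs
  imports "HOL-Analysis.Analysis" "HOL-Library.Disjoint_Sets"
begin

(* A binary vector of length N = n choose 2 is represented by its support: a set of
   index pairs (i,j) with 1 <= i < j <= n (the upper-triangular positions). *)

definition gamma_pq :: "real \<Rightarrow> real \<Rightarrow> real" where
  "gamma_pq p q = log (q / (1 - p)) (p / (1 - q))"

(* community code C_{n,m}: upper-triangular adjacency supports of graphs on {1..n}
   that are disjoint unions of cliques, each clique of size >= m *)
definition community_code :: "nat \<Rightarrow> nat \<Rightarrow> (nat \<times> nat) set set" where
  "community_code n m =
     { {(i, j). i < j \<and> (\<exists>B\<in>P. i \<in> B \<and> j \<in> B)} | P.
         partition_on {1..n} P \<and> (\<forall>B\<in>P. m \<le> card B) }"

(* d_{ab}(y,x) counts positions with y_i = a, x_i = b *)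
definition d10 :: "(nat \<times> nat) set \<Rightarrow> (nat \<times> nat) set \<Rightarrow> nat" where
  "d10 y x = card (y - x)"

definition d01 :: "(nat \<times> nat) set \<Rightarrow> (nat \<times> nat) set \<Rightarrow> nat" where
  "d01 y x = card (x - y)"

definition discrepancy :: "real \<Rightarrow> real \<Rightarrow> (nat \<times> nat) set \<Rightarrow> (nat \<times> nat) set \<Rightarrow> real" where
  "discrepancy p q y x = gamma_pq p q * real (d10 y x) + real (d01 y x)"

definition min_discrepancy :: "real \<Rightarrow> real \<Rightarrow> (nat \<times> nat) set set \<Rightarrow> real" where
  "min_discrepancy p q C = Min {discrepancy p q y x | x y. x \<in> C \<and> y \<in> C \<and> x \<noteq> y}"

end

theory Submission
  imports Defs
begin

text \<open>Both bounds come from explicit pairs of codewords built from interval partitions of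
  \<open>{1..n}\<close> into blocks of size at least \<open>m\<close>: splitting a block of size \<open>2m\<close> into two halves
  loses exactly the \<open>m\<^sup>2\<close> edges between the halves, and moving one vertex from a block of
  size \<open>m + 1\<close> to an adjacent block of size \<open>m\<close> creates \<open>m\<close> edges and destroys \<open>m\<close> edges.\<close>

definition clique_support :: "nat set set \<Rightarrow> (nat \<times> nat) set" where
  "clique_support P = {(i, j). i < j \<and> (\<exists>B\<in>P. i \<in> B \<and> j \<in> B)}"

lemma clique_support_in_community_code:
  assumes "partition_on {1..n} P" and "\<forall>B\<in>P. m \<le> card B"
  shows "clique_support P \<in> community_code n m"
  using assms unfolding community_code_def clique_support_def by blast

lemma community_code_subset_Pow: "community_code n m \<subseteq> Pow ({1..n} \<times> {1..n})"
proof
  fix x assume "x \<in> community_code n m"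
  then obtain P where P: "partition_on {1..n} P" and x: "x = clique_support P"
    unfolding community_code_def clique_support_def by blast
  have "B \<subseteq> {1..n}" if "B \<in> P" for B
    using P that by (auto simp: partition_on_def)
  then show "x \<in> Pow ({1..n} \<times> {1..n})"
    unfolding x clique_support_def by blast
qed

lemma finite_community_code: "finite (community_code n m)"
  using community_code_subset_Pow by (rule finite_subset) simp

lemma min_discrepancy_le:
  assumes "finite C" and "x \<in> C" and "y \<in> C" and "x \<noteq> y"
  shows "min_discrepancy p q C \<le> discrepancy p q y x"
proof -
  let ?S = "{discrepancy p q y x | x y. x \<in> C \<and> y \<in> C \<and> x \<noteq> y}"
  have "?S \<subseteq> (\<lambda>(x, y). discrepancy p q y x) ` (C \<times> C)"
    by force
  then have "finite ?S"
    using assms(1) by (simp add: finite_subset)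
  moreover have "discrepancy p q y x \<in> ?S"
    using assms(2-4) by blast
  ultimately show ?thesis
    unfolding min_discrepancy_def by (rule Min_le)
qed

lemma partition_on_intervals2:
  fixes b n :: nat
  assumes "1 \<le> b" and "b < n"
  shows "partition_on {1..n} {{1..b}, {b+1..n}}"
  using assms unfolding partition_on_def disjoint_def by auto

lemma partition_on_intervals3:
  fixes a b n :: nat
  assumes "1 \<le> a" and "a < b" and "b < n"
  shows "partition_on {1..n} {{1..a}, {a+1..b}, {b+1..n}}"
  using assms unfolding partition_on_def disjoint_def by auto

lemma intervals2_in_community_code:
  fixes b n m :: nat
  assumes "1 \<le> m" and "m \<le> b" and "b + m \<le> n"
  shows "clique_support {{1..b}, {b+1..n}} \<in> community_code n m"
  using assms by (intro clique_support_in_community_code partition_on_intervals2) auto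

lemma intervals3_in_community_code:
  fixes a b n m :: nat
  assumes "1 \<le> m" and "m \<le> a" and "a + m \<le> b" and "b + m \<le> n"
  shows "clique_support {{1..a}, {a+1..b}, {b+1..n}} \<in> community_code n m"
  using assms by (intro clique_support_in_community_code partition_on_intervals3) auto

lemma clique_support_merge_minus_split:
  fixes a b n :: nat
  assumes "a \<le> b"
  shows "clique_support {{1..b}, {b+1..n}} - clique_support {{1..a}, {a+1..b}, {b+1..n}}
           = {1..a} \<times> {a+1..b}"
  using assms unfolding clique_support_def by auto

lemma clique_support_split_minus_merge:
  fixes a b n :: nat
  assumes "a \<le> b"
  shows "clique_support {{1..a}, {a+1..b}, {b+1..n}} - clique_support {{1..b}, {b+1..n}} = {}"
  using assms unfolding clique_support_def by auto

lemma clique_support_moved_minus_unmoved: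
  fixes a b n :: nat
  assumes "a < b"
  shows "clique_support {{1..a+1}, {a+2..b}, {b+1..n}} - clique_support {{1..a}, {a+1..b}, {b+1..n}}
           = {1..a} \<times> {a+1}"
  using assms unfolding clique_support_def by auto

lemma clique_support_unmoved_minus_moved:
  fixes a b n :: nat
  assumes "a < b"
  shows "clique_support {{1..a}, {a+1..b}, {b+1..n}} - clique_support {{1..a+1}, {a+2..b}, {b+1..n}}
           = {a+1} \<times> {a+2..b}"
  using assms unfolding clique_support_def by auto

lemma discrepancy_split_merge:
  fixes a b n :: nat
  assumes "a \<le> b"
  shows "discrepancy p q (clique_support {{1..a}, {a+1..b}, {b+1..n}})
                         (clique_support {{1..b}, {b+1..n}}) = real (a * (b - a))"
  unfolding discrepancy_def d10_def d01_def
    clique_support_merge_minus_split[OF assms] clique_support_split_minus_merge[OF assms]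
  by simp

lemma discrepancy_move_vertex:
  fixes a b n :: nat
  assumes "a < b"
  shows "discrepancy p q (clique_support {{1..a+1}, {a+2..b}, {b+1..n}})
                         (clique_support {{1..a}, {a+1..b}, {b+1..n}})
           = gamma_pq p q * real a + real (b - a - 1)"
  unfolding discrepancy_def d10_def d01_def
    clique_support_moved_minus_unmoved[OF assms] clique_support_unmoved_minus_moved[OF assms]
  by simp

lemma min_discrepancy_community_code_le_square:
  fixes n m :: nat
  assumes "1 \<le> m" and "3 * m \<le> n"
  shows "min_discrepancy p q (community_code n m) \<le> real (m ^ 2)"
proof -
  let ?C = "community_code n m"
  let ?split = "clique_support {{1..m}, {m+1..2*m}, {2*m+1..n}}"
  let ?merged = "clique_support {{1..2*m}, {2*m+1..n}}"
  have split_in: "?split \<in> ?C"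
    using assms by (intro intervals3_in_community_code) auto
  have merged_in: "?merged \<in> ?C"
    using assms by (intro intervals2_in_community_code) auto
  have "?merged - ?split = {1..m} \<times> {m+1..2*m}"
    by (rule clique_support_merge_minus_split) simp
  then have "(1, m+1) \<in> ?merged - ?split"
    using assms(1) by simp
  then have "?merged \<noteq> ?split"
    by blast
  then have "min_discrepancy p q ?C \<le> discrepancy p q ?split ?merged"
    using split_in merged_in by (intro min_discrepancy_le finite_community_code)
  also have "\<dots> = real (m * (2*m - m))"
    by (rule discrepancy_split_merge) simp
  also have "\<dots> = real (m ^ 2)"
    by (simp add: power2_eq_square)
  finally show ?thesis .
qed

lemma min_discrepancy_community_code_le_linear:
  fixes n m :: nat
  assumes "1 \<le> m" and "3 * m + 1 \<le> n"
  shows "min_discrepancy p q (community_code n m) \<le> (1 + gamma_pq p q) * real m"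
proof -
  let ?C = "community_code n m"
  let ?unmoved = "clique_support {{1..m}, {m+1..2*m+1}, {2*m+1+1..n}}"
  let ?moved = "clique_support {{1..m+1}, {m+2..2*m+1}, {2*m+1+1..n}}"
  have unmoved_in: "?unmoved \<in> ?C"
    using assms by (intro intervals3_in_community_code) auto
  have moved_in: "?moved \<in> ?C"
    using assms intervals3_in_community_code[of m "m+1" "2*m+1" n] by simp
  have "?moved - ?unmoved = {1..m} \<times> {m+1}"
    by (rule clique_support_moved_minus_unmoved) simp
  then have "(1, m+1) \<in> ?moved - ?unmoved"
    using assms(1) by simp
  then have "?unmoved \<noteq> ?moved"
    by blast
  then have "min_discrepancy p q ?C \<le> discrepancy p q ?moved ?unmoved"
    using moved_in unmoved_in by (intro min_discrepancy_le finite_community_code)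
  also have "\<dots> = gamma_pq p q * real m + real (2*m + 1 - m - 1)"
    by (rule discrepancy_move_vertex) simp
  also have "\<dots> = (1 + gamma_pq p q) * real m"
    by (simp add: algebra_simps)
  finally show ?thesis .
qed

theorem theorem3:
  fixes n m :: nat and p q :: real
  assumes "m \<ge> 1" and "n \<ge> 3 * m + 1"
    and "0 < p" and "p \<le> q" and "0 < p + q" and "p + q < 1"
  shows "min_discrepancy p q (community_code n m)
           \<le> min (real (m ^ 2)) ((1 + gamma_pq p q) * real m)"
  using min_discrepancy_community_code_le_square[of m n p q]
    min_discrepancy_community_code_le_linear[of m n p q] assms(1,2)
  by simp

end
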